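(* Let $r\in\mathbb{N}_0$, $s\in\mathbb{N}$, and let $I,J$ be finite sets with $|I|=r$, $|J|=r+s$. Let $n\in\mathbb{N}$ (so $n\ge1$) and $A=(a_{i,j})\in\mathbb{N}_0^{I\times J}$ with $\sum_{j\in J}a_{i,j}\le n$ for all $i\in I$, and suppose exactly $u$ rows of $A$ have exactly one non-zero entry. Then $$\min\{\|\mathbf{v}\|_\infty\mid \mathbf{0}\neq\mathbf{v}\in\ker(A)\cap\mathbb{Z}^J\}\ \le\ \left\lfloor n^{\frac{r-u}{s}}\right\rfloor,$$ where $\ker(A)$ is the kernel of the linear map $\mathbb{Q}^J\to\mathbb{Q}^I$ given by $A$ and $\|\mathbf{v}\|_\infty=\max_j|v_j|$ (in particular, the set on the left is non-empty). *)

theory Defs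
  imports Complex_Main
begin

end

theory Submission
  imports Defs "HOL-Library.FuncSet"
begin

text \<open>A row with a single non-zero entry forces the corresponding coordinate of every kernel
  vector to vanish. Deleting the \<open>u\<close> such rows together with the at most \<open>u\<close> columns they hit
  leaves \<open>r - u\<close> equations in at least \<open>r + s - u\<close> unknowns, and Siegel's pigeonhole argument
  applies: with \<open>B = \<lfloor>n\<^bsup>(r-u)/s\<^esup>\<rfloor>\<close> there are more vectors in \<open>{0..B}\<^bsup>J'\<^esup>\<close> than possible
  images in \<open>{0..nB}\<^bsup>I'\<^esup>\<close>, and the difference of two vectors with the same image is a non-zero
  kernel vector with entries bounded by \<open>B\<close>.\<close>

lemma pow_less_Suc_floor_powr_pow:
  fixes n e s :: nat
  assumes "n > 0" "s > 0"
  shows "n ^ e < (nat \<lfloor>real n powr (real e / real s)\<rfloor> + 1) ^ s"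
proof -
  define p where "p = real n powr (real e / real s)"
  have p_nonneg: "p \<ge> 0" unfolding p_def by simp
  have "p ^ s = real n powr (real e / real s * real s)"
    using assms by (simp add: p_def powr_realpow[symmetric] powr_powr)
  also have "\<dots> = real n ^ e" using assms by (simp add: powr_realpow)
  finally have "real n ^ e = p ^ s" by simp
  also have "\<dots> < (real (nat \<lfloor>p\<rfloor>) + 1) ^ s"
    using p_nonneg assms(2) by (intro power_strict_mono) linarith+
  finally have "real (n ^ e) < real ((nat \<lfloor>p\<rfloor> + 1) ^ s)" by (simp add: add.commute)
  thus ?thesis unfolding p_def by (simp only: of_nat_less_iff)
qed

lemma box_card_less:
  fixes n B e s :: nat
  assumes "n > 0" "n ^ e < (B + 1) ^ s"
  shows "(n * B + 1) ^ e < (B + 1) ^ (e + s)"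
proof -
  have "(n * B + 1) ^ e \<le> (n * (B + 1)) ^ e"
    using assms(1) by (intro power_mono) auto
  also have "\<dots> = n ^ e * (B + 1) ^ e" by (rule power_mult_distrib)
  also have "\<dots> < (B + 1) ^ s * (B + 1) ^ e" using assms(2) by simp
  also have "\<dots> = (B + 1) ^ (e + s)" by (simp add: power_add)
  finally show ?thesis .
qed

lemma matrix_image_box:
  fixes A :: "'i \<Rightarrow> 'j \<Rightarrow> nat" and x :: "'j \<Rightarrow> int"
  assumes "\<forall>i\<in>I. (\<Sum>j\<in>J. A i j) \<le> n" "i \<in> I" "\<forall>j\<in>J. x j \<in> {0..int B}"
  shows "(\<Sum>j\<in>J. int (A i j) * x j) \<in> {0..int (n * B)}"
proof -
  have "(\<Sum>j\<in>J. int (A i j) * x j) \<le> (\<Sum>j\<in>J. int (A i j) * int B)"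
    using assms(3) by (intro sum_mono mult_left_mono) auto
  also have "\<dots> = int (\<Sum>j\<in>J. A i j) * int B" by (simp add: sum_distrib_right)
  also have "\<dots> \<le> int n * int B"
    using assms(1,2) by (intro mult_right_mono) (auto simp flip: of_nat_sum)
  finally show ?thesis using assms(3) by (auto intro: sum_nonneg)
qed

lemma siegel_pigeonhole:
  fixes A :: "'i \<Rightarrow> 'j \<Rightarrow> nat" and n B :: nat
  assumes "finite I" "finite J"
    and "\<forall>i\<in>I. (\<Sum>j\<in>J. A i j) \<le> n"
    and "(n * B + 1) ^ card I < (B + 1) ^ card J"
  obtains v :: "'j \<Rightarrow> int"
  where "\<forall>j. j \<notin> J \<longrightarrow> v j = 0" "\<exists>j\<in>J. v j \<noteq> 0" "\<forall>j\<in>J. \<bar>v j\<bar> \<le> int B"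
    and "\<forall>i\<in>I. (\<Sum>j\<in>J. int (A i j) * v j) = 0"
proof -
  define X where "X = PiE J (\<lambda>_. {0..int B})"
  define Y where "Y = PiE I (\<lambda>_. {0..int (n * B)})"
  define f where "f x = (\<lambda>i\<in>I. \<Sum>j\<in>J. int (A i j) * x j)" for x :: "'j \<Rightarrow> int"
  have "f ` X \<subseteq> Y"
  proof
    fix z assume "z \<in> f ` X"
    then obtain x where x: "x \<in> X" "z = f x" by blast
    have "\<forall>j\<in>J. x j \<in> {0..int B}" using x(1) by (auto simp: X_def)
    then show "z \<in> Y"
      using x(2) matrix_image_box[OF assms(3)]
      by (auto simp: f_def Y_def simp del: atLeastAtMost_iff)
  qed
  moreover have "card Y < card X"
    using assms by (simp add: X_def Y_def card_PiE nat_add_distrib nat_mult_distrib)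
  moreover have "finite Y" using assms(1) by (simp add: Y_def finite_PiE)
  ultimately have "\<not> inj_on f X" using card_inj_on_le by (metis not_le)
  then obtain x y where xy: "x \<in> X" "y \<in> X" "x \<noteq> y" "f x = f y"
    unfolding inj_on_def by blast
  define v where "v j = (if j \<in> J then x j - y j else 0)" for j
  have "\<exists>j\<in>J. x j \<noteq> y j"
  proof (rule ccontr)
    assume "\<not> (\<exists>j\<in>J. x j \<noteq> y j)"
    then have "x = y" using xy(1,2) unfolding X_def by (intro PiE_ext) auto
    with xy(3) show False ..
  qed
  then have "\<exists>j\<in>J. v j \<noteq> 0" by (auto simp: v_def)
  moreover have "\<bar>v j\<bar> \<le> int B" if "j \<in> J" for j
  proof -
    have "x j \<in> {0..int B}" "y j \<in> {0..int B}" using xy(1,2) that unfolding X_def by blast+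
    then show ?thesis using that by (auto simp: v_def)
  qed
  moreover have "(\<Sum>j\<in>J. int (A i j) * v j) = 0" if "i \<in> I" for i
  proof -
    have "(\<Sum>j\<in>J. int (A i j) * v j) = f x i - f y i"
      using that by (simp add: f_def v_def right_diff_distrib sum_subtractf)
    thus ?thesis using xy(4) by simp
  qed
  moreover have "\<forall>j. j \<notin> J \<longrightarrow> v j = 0" by (simp add: v_def)
  ultimately show thesis using that by blast
qed

lemma card_columns_of_singleton_rows:
  fixes A :: "'i \<Rightarrow> 'j \<Rightarrow> nat"
  assumes "finite U" "\<forall>i\<in>U. card {j \<in> J. A i j \<noteq> 0} = 1"
  shows "card (\<Union>i\<in>U. {j \<in> J. A i j \<noteq> 0}) \<le> card U"
proof -
  have "card (\<Union>i\<in>U. {j \<in> J. A i j \<noteq> 0}) \<le> (\<Sum>i\<in>U. card {j \<in> J. A i j \<noteq> 0})"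
    by (rule card_UN_le[OF assms(1)])
  also have "\<dots> = card U" using assms(2) by simp
  finally show ?thesis .
qed

lemma siegel_without_singleton_rows:
  fixes I :: "'i set" and J :: "'j set" and A :: "'i \<Rightarrow> 'j \<Rightarrow> nat" and n B s :: nat
  defines "U \<equiv> {i \<in> I. card {j \<in> J. A i j \<noteq> 0} = 1}"
  assumes "finite I" "finite J" "card I + s \<le> card J" "n > 0"
    and "\<forall>i\<in>I. (\<Sum>j\<in>J. A i j) \<le> n"
    and "n ^ card (I - U) < (B + 1) ^ s"
  obtains v :: "'j \<Rightarrow> int"
  where "\<forall>j. j \<notin> J \<longrightarrow> v j = 0" "\<exists>j\<in>J. v j \<noteq> 0" "\<forall>j\<in>J. \<bar>v j\<bar> \<le> int B"
    and "\<forall>i\<in>I. (\<Sum>j\<in>J. int (A i j) * v j) = 0"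
proof -
  define J0 where "J0 = (\<Union>i\<in>U. {j \<in> J. A i j \<noteq> 0})"
  have U_sub: "U \<subseteq> I" and J0_sub: "J0 \<subseteq> J" unfolding U_def J0_def by auto
  have "card J0 \<le> card U"
    unfolding J0_def using assms(2) U_sub
    by (intro card_columns_of_singleton_rows) (auto simp: U_def finite_subset)
  moreover have "card U \<le> card I" using assms(2) U_sub by (rule card_mono)
  ultimately have card_cols: "card (I - U) + s \<le> card (J - J0)"
    using assms(2,3,4) U_sub J0_sub by (simp add: card_Diff_subset finite_subset)
  have "(n * B + 1) ^ card (I - U) < (B + 1) ^ (card (I - U) + s)"
    using assms(5,7) by (rule box_card_less)
  also have "\<dots> \<le> (B + 1) ^ card (J - J0)"
    using card_cols by (intro power_increasing) auto
  finally have "(n * B + 1) ^ card (I - U) < (B + 1) ^ card (J - J0)" .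
  moreover have "(\<Sum>j\<in>J - J0. A i j) \<le> n" if "i \<in> I - U" for i
  proof -
    have "(\<Sum>j\<in>J - J0. A i j) \<le> (\<Sum>j\<in>J. A i j)" using assms(3) by (intro sum_mono2) auto
    also have "\<dots> \<le> n" using assms(6) that by blast
    finally show ?thesis .
  qed
  ultimately obtain v :: "'j \<Rightarrow> int"
    where v_supp: "\<forall>j. j \<notin> J - J0 \<longrightarrow> v j = 0" and v_nz: "\<exists>j\<in>J - J0. v j \<noteq> 0"
      and v_bound: "\<forall>j\<in>J - J0. \<bar>v j\<bar> \<le> int B"
      and v_ker: "\<forall>i\<in>I - U. (\<Sum>j\<in>J - J0. int (A i j) * v j) = 0"
    using siegel_pigeonhole[of "I - U" "J - J0" A n B] assms(2,3) by blast
  have "(\<Sum>j\<in>J. int (A i j) * v j) = 0" if "i \<in> I" for i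
  proof (cases "i \<in> U")
    case True
    have "int (A i j) * v j = 0" if "j \<in> J" for j
      using True that v_supp unfolding J0_def by (cases "A i j = 0") auto
    then show ?thesis by (intro sum.neutral) blast
  next
    case False
    have "(\<Sum>j\<in>J. int (A i j) * v j) = (\<Sum>j\<in>J - J0. int (A i j) * v j)"
      using assms(3) v_supp by (intro sum.mono_neutral_right) auto
    then show ?thesis using v_ker that False by simp
  qed
  moreover have "\<forall>j\<in>J. \<bar>v j\<bar> \<le> int B" using v_supp v_bound by force
  ultimately show thesis using that v_supp v_nz by blast
qed

lemma Inf_Max_abs_le:
  fixes K :: "('j \<Rightarrow> int) set"
  assumes "finite J" "J \<noteq> {}" "v \<in> K" "\<forall>j\<in>J. \<bar>v j\<bar> \<le> b"
  shows "Inf ((\<lambda>v. Max ((\<lambda>j. \<bar>v j\<bar>) ` J)) ` K) \<le> b"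
proof -
  have "0 \<le> Max ((\<lambda>j. \<bar>w j\<bar>) ` J)" for w :: "'j \<Rightarrow> int"
    using assms(1,2) by (auto simp: Max_ge_iff)
  hence "bdd_below ((\<lambda>v. Max ((\<lambda>j. \<bar>v j\<bar>) ` J)) ` K)"
    by (intro bdd_belowI[of _ 0]) auto
  hence "Inf ((\<lambda>v. Max ((\<lambda>j. \<bar>v j\<bar>) ` J)) ` K) \<le> Max ((\<lambda>j. \<bar>v j\<bar>) ` J)"
    using assms(3) by (intro cInf_lower) auto
  also have "\<dots> \<le> b" using assms(1,2,4) by (auto simp: Max_le_iff)
  finally show ?thesis .
qed

theorem lemma5p2:
  fixes I :: "'i set" and J :: "'j set" and A :: "'i \<Rightarrow> 'j \<Rightarrow> nat"
    and r s n u :: nat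
  assumes "finite I" and "finite J"
    and "card I = r" and "card J = r + s" and "s \<ge> 1" and "n \<ge> 1"
    and "\<forall>i\<in>I. (\<Sum>j\<in>J. A i j) \<le> n"
    and "u = card {i \<in> I. card {j \<in> J. A i j \<noteq> 0} = 1}"
  defines "K \<equiv> {v :: 'j \<Rightarrow> int. (\<forall>j. j \<notin> J \<longrightarrow> v j = 0) \<and> (\<exists>j\<in>J. v j \<noteq> 0)
                 \<and> (\<forall>i\<in>I. (\<Sum>j\<in>J. of_nat (A i j) * of_int (v j)) = (0::rat))}"
  shows "K \<noteq> {} \<and>
         Inf ((\<lambda>v. Max ((\<lambda>j. \<bar>v j\<bar>) ` J)) ` K)
           \<le> \<lfloor>real n powr ((real r - real u) / real s)\<rfloor>"
proof -
  define U where "U = {i \<in> I. card {j \<in> J. A i j \<noteq> 0} = 1}"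
  define B where "B = nat \<lfloor>real n powr (real (r - u) / real s)\<rfloor>"
  have U_sub: "U \<subseteq> I" unfolding U_def by auto
  have u_le: "u \<le> r" using assms(1,3,8) U_sub card_mono U_def by metis
  have "card (I - U) = r - u"
    using assms(1,3,8) U_sub by (simp add: card_Diff_subset finite_subset U_def)
  moreover have "n ^ (r - u) < (B + 1) ^ s"
    unfolding B_def using assms(5,6) by (intro pow_less_Suc_floor_powr_pow) auto
  ultimately obtain v :: "'j \<Rightarrow> int"
    where v_supp: "\<forall>j. j \<notin> J \<longrightarrow> v j = 0" and v_nz: "\<exists>j\<in>J. v j \<noteq> 0"
      and v_bound: "\<forall>j\<in>J. \<bar>v j\<bar> \<le> int B"
      and v_ker: "\<forall>i\<in>I. (\<Sum>j\<in>J. int (A i j) * v j) = 0"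
    using siegel_without_singleton_rows[of I J s n A B] assms(1-7) unfolding U_def by auto
  have "(\<Sum>j\<in>J. of_nat (A i j) * of_int (v j)) = (0::rat)" if "i \<in> I" for i
  proof -
    have "(\<Sum>j\<in>J. of_nat (A i j) * of_int (v j)) = (of_int (\<Sum>j\<in>J. int (A i j) * v j) :: rat)"
      by simp
    then show ?thesis using v_ker that by simp
  qed
  hence v_in_K: "v \<in> K" unfolding K_def using v_supp v_nz by blast
  moreover have "int B = \<lfloor>real n powr ((real r - real u) / real s)\<rfloor>"
    using u_le by (simp add: B_def of_nat_diff)
  ultimately show ?thesis
    using Inf_Max_abs_le[OF assms(2) _ v_in_K v_bound] v_nz by auto
qed

end
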